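(* Let $s\ge 1$, let $1\le p\le\infty$, and let $d^p$ be the $\ell^p$-votewise distance built from any family of maps $d_C:L(C)\times L(C)\to[0,\infty)$ satisfying $d_C(\rho,\rho)=0$ and the triangle inequality. Then $\mathcal R(\mathrm{Unam}^s,d^p)$ is homogeneous: $\mathcal R(\mathrm{Unam}^s,d^p)(E)=\mathcal R(\mathrm{Unam}^s,d^p)(E')$ whenever $E\sim_H E'$.
   Context: Elections: $E=(C,V,\pi)$ with $C$ a finite subset of a countably infinite set $C^*$, $V$ a finite nonempty subset of a countably infinite set $V^*$, $\pi:V\to L(C)$ ($L(C)$ = strict linear orders of $C$, $L_s(C)$ = strict linear orders of $s$ distinct elements of $C$). Homogeneity relation $\sim_H$: same candidate set $C$ and $|\pi^{-1}(\rho)|/|V|=|\pi'^{-1}(\rho)|/|V'|$ for all $\rho\in L(C)$. $\mathrm{Unam}^s$ is the $s$-consensus whose domain consists of the elections with $|C|\ge s$ in which all voters rank the same $s$ candidates, in the same order, in their top $s$ positions, the consensus value being this common $s$-ranking; $\mathrm{Unam}^s_r$ is the set of elections with value $r$. Votewise $\ell^p$ distance: fix an enumeration of $V^*$; for $E=(C,V,\pi),E'=(C,V,\pi')$ with $V=\{v_1<\dots<v_n\}$, $d^p(E,E')=\|(d_C(\pi(v_1),\pi'(v_1)),\dots,d_C(\pi(v_n),\pi'(v_n)))\|_p$, and $d^p(E,E')=\infty$ if the candidate sets or voter sets differ. $d(E,A)=\inf_{F\in A}d(E,F)$ ($\infty$ if $A=\emptyset$); $\mathcal R(\mathcal K,d)(E)$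 is the set of $r\in L_s(C^* )$ with $d(E,\mathcal K_r)=\inf_{r'\in L_s(C^* )}d(E,\mathcal K_{r'})$. *)

theory Defs
  imports "HOL-Library.Extended_Real" "HOL-Library.Countable"
begin

text \<open>A strict linear order of C is represented by the list of the elements of C
  from best to worst (a distinct list whose set is C).\<close>

type_synonym ('c, 'v) election = "'c set \<times> 'v set \<times> ('v \<Rightarrow> 'c list)"

definition linord :: "'c set \<Rightarrow> 'c list set" where
  "linord C = {xs. distinct xs \<and> set xs = C}"

definition linord_s :: "nat \<Rightarrow> 'c list set" where
  "linord_s s = {xs. distinct xs \<and> length xs = s}"

definition is_election :: "('c, 'v) election \<Rightarrow> bool" where
  "is_election E = (case E of (C, V, \<pi>) \<Rightarrow>
     finite C \<and> finite V \<and> V \<noteq> {} \<and> (\<forall>v\<in>V. \<pi> v \<in> linord C))"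

definition hom_rel :: "('c, 'v) election \<Rightarrow> ('c, 'v) election \<Rightarrow> bool" where
  "hom_rel E E' = (case E of (C, V, \<pi>) \<Rightarrow> case E' of (C', V', \<pi>') \<Rightarrow>
     is_election E \<and> is_election E' \<and> C = C' \<and>
     (\<forall>\<rho>\<in>linord C. real (card {v\<in>V. \<pi> v = \<rho>}) / real (card V)
                    = real (card {v\<in>V'. \<pi>' v = \<rho>}) / real (card V')))"

definition unam :: "nat \<Rightarrow> 'c list \<Rightarrow> ('c, 'v) election set" where
  "unam s r = {(C, V, \<pi>). is_election (C, V, \<pi>) \<and> s \<le> card C \<and> (\<forall>v\<in>V. take s (\<pi> v) = r)}"

text \<open>Since the l^p norm is invariant under permutation of coordinates, the fixed enumeration of
  the voter universe is irrelevant and we sum/maximize over V directly.\<close>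
definition votewise_dist ::
  "('c set \<Rightarrow> 'c list \<Rightarrow> 'c list \<Rightarrow> real) \<Rightarrow> ereal \<Rightarrow> ('c, 'v) election \<Rightarrow> ('c, 'v) election \<Rightarrow> ereal" where
  "votewise_dist dC p E E' = (case E of (C, V, \<pi>) \<Rightarrow> case E' of (C', V', \<pi>') \<Rightarrow>
     if C = C' \<and> V = V' then
       (if p = \<infinity> then ereal (Max ((\<lambda>v. dC C (\<pi> v) (\<pi>' v)) ` V))
        else ereal ((\<Sum>v\<in>V. dC C (\<pi> v) (\<pi>' v) powr real_of_ereal p) powr (1 / real_of_ereal p)))
     else \<infinity>)"

definition set_dist :: "('e \<Rightarrow> 'e \<Rightarrow> ereal) \<Rightarrow> 'e \<Rightarrow> 'e set \<Rightarrow> ereal" where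
  "set_dist d E A = (INF F\<in>A. d E F)"

definition dr_rule :: "nat \<Rightarrow> ('c list \<Rightarrow> 'e set) \<Rightarrow> ('e \<Rightarrow> 'e \<Rightarrow> ereal) \<Rightarrow> 'e \<Rightarrow> 'c list set" where
  "dr_rule s K d E = {r \<in> linord_s s.
     set_dist d E (K r) = (INF r'\<in>linord_s s. set_dist d E (K r'))}"

end

theory Submission
  imports Defs
begin

text \<open>Reaching Unam^s_r from E = (C, V, \<pi>) means replacing every vote by a ranking of C that
  starts with r, and the votes can be replaced independently.  Hence the distance from E to
  Unam^s_r is the \<ell>^p-aggregate of the per-vote distances m_r(\<pi> v) to the nearest such ranking
  (and \<infinity> if r is not a list of candidates of C).  Grouping voters by their vote, this
  aggregate is a strictly increasing function, depending on |V| only, of a cost that depends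
  only on the shares of the rankings in E: the share-weighted sum of m_r^p for finite p, and the
  maximum of m_r over the rankings that occur for p = \<infinity>.  So the comparison of any two
  values r, r' depends only on the vote shares, which homogeneous elections have in common.\<close>

lemma finite_linord: "finite C \<Longrightarrow> finite (linord C)"
  by (rule finite_subset[OF _ finite_subset_distinct[of C]]) (auto simp: linord_def)

definition extensions :: "nat \<Rightarrow> 'c set \<Rightarrow> 'c list \<Rightarrow> 'c list set" where
  "extensions s C r = {\<sigma> \<in> linord C. take s \<sigma> = r}"

lemma finite_extensions: "finite C \<Longrightarrow> finite (extensions s C r)"
  by (simp add: extensions_def finite_linord)

lemma extensions_nonempty:
  assumes "finite C" "r \<in> linord_s s" "set r \<subseteq> C"
  shows "extensions s C r \<noteq> {}"
proof -
  obtain ys where ys: "set ys = C - set r" "distinct ys"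
    using finite_distinct_list[of "C - set r"] assms(1) by auto
  have "r @ ys \<in> extensions s C r"
    using assms ys by (auto simp: extensions_def linord_def linord_s_def)
  then show ?thesis by auto
qed

lemma set_subset_if_extension: "\<sigma> \<in> extensions s C r \<Longrightarrow> set r \<subseteq> C"
  unfolding extensions_def linord_def by (auto dest: in_set_takeD)

definition dist_to_extensions ::
  "('c set \<Rightarrow> 'c list \<Rightarrow> 'c list \<Rightarrow> real) \<Rightarrow> nat \<Rightarrow> 'c set \<Rightarrow> 'c list \<Rightarrow> 'c list \<Rightarrow> real" where
  "dist_to_extensions dC s C r \<rho> = Min (dC C \<rho> ` extensions s C r)"

lemma dist_to_extensions_le:
  "finite C \<Longrightarrow> \<sigma> \<in> extensions s C r \<Longrightarrow> dist_to_extensions dC s C r \<rho> \<le> dC C \<rho> \<sigma>"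
  unfolding dist_to_extensions_def by (simp add: finite_extensions)

lemma dist_to_extensions_attained:
  assumes "finite C" "extensions s C r \<noteq> {}"
  obtains \<sigma> where "\<sigma> \<in> extensions s C r" "dC C \<rho> \<sigma> = dist_to_extensions dC s C r \<rho>"
proof -
  have "dist_to_extensions dC s C r \<rho> \<in> dC C \<rho> ` extensions s C r"
    unfolding dist_to_extensions_def using assms by (simp add: finite_extensions)
  then show ?thesis using that by auto
qed

definition votewise_norm :: "ereal \<Rightarrow> 'v set \<Rightarrow> ('v \<Rightarrow> real) \<Rightarrow> ereal" where
  "votewise_norm p V g = (if p = \<infinity> then ereal (Max (g ` V))
     else ereal ((\<Sum>v\<in>V. g v powr real_of_ereal p) powr (1 / real_of_ereal p)))"

lemma votewise_dist_same_support:
  "votewise_dist dC p (C, V, \<pi>) (C, V, \<pi>') = votewise_norm p V (\<lambda>v. dC C (\<pi> v) (\<pi>' v))"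
  by (simp add: votewise_dist_def votewise_norm_def)

lemma votewise_norm_cong: "(\<And>v. v \<in> V \<Longrightarrow> g v = h v) \<Longrightarrow> votewise_norm p V g = votewise_norm p V h"
  unfolding votewise_norm_def by (simp cong: image_cong sum.cong)

lemma real_of_ereal_ge_1: "1 \<le> p \<Longrightarrow> p \<noteq> \<infinity> \<Longrightarrow> 1 \<le> real_of_ereal p"
  by (cases p) auto

lemma votewise_norm_mono:
  assumes "finite V" "V \<noteq> {}" "1 \<le> p"
    and "\<And>v. v \<in> V \<Longrightarrow> 0 \<le> g v" "\<And>v. v \<in> V \<Longrightarrow> g v \<le> h v"
  shows "votewise_norm p V g \<le> votewise_norm p V h"
proof (cases "p = \<infinity>")
  case True
  have "Max (g ` V) \<le> Max (h ` V)"
    using assms by (intro Max.boundedI) (auto intro: order_trans[OF _ Max.coboundedI])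
  then show ?thesis using True by (simp add: votewise_norm_def)
next
  case False
  have q: "1 \<le> real_of_ereal p" using real_of_ereal_ge_1 assms(3) False .
  have "(\<Sum>v\<in>V. g v powr real_of_ereal p) \<le> (\<Sum>v\<in>V. h v powr real_of_ereal p)"
    using assms q by (intro sum_mono powr_mono2) auto
  moreover have "0 \<le> (\<Sum>v\<in>V. g v powr real_of_ereal p)" by (intro sum_nonneg) auto
  ultimately show ?thesis using False q by (simp add: votewise_norm_def powr_mono2)
qed

lemma votewise_dist_to_unam:
  assumes "F \<in> unam s r" "votewise_dist dC p (C, V, \<pi>) F \<noteq> \<infinity>"
  obtains \<pi>' where "F = (C, V, \<pi>')" "\<And>v. v \<in> V \<Longrightarrow> \<pi>' v \<in> extensions s C r"
proof -
  obtain C' V' \<pi>' where F: "F = (C', V', \<pi>')" by (cases F)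
  with assms(2) have "C' = C" "V' = V" by (auto simp: votewise_dist_def split: if_splits)
  with assms(1) F have "\<forall>v\<in>V. \<pi>' v \<in> extensions s C r"
    by (auto simp: unam_def is_election_def extensions_def)
  with F \<open>C' = C\<close> \<open>V' = V\<close> show ?thesis using that by blast
qed

lemma set_dist_unam_outside:
  assumes "is_election (C, V, \<pi>)" "\<not> set r \<subseteq> C"
  shows "set_dist (votewise_dist dC p) (C, V, \<pi>) (unam s r) = \<infinity>"
proof -
  obtain v where "v \<in> V" using assms(1) by (auto simp: is_election_def)
  have "votewise_dist dC p (C, V, \<pi>) F = \<infinity>" if "F \<in> unam s r" for F
    using votewise_dist_to_unam[OF that] \<open>v \<in> V\<close> assms(2) set_subset_if_extension by metis
  then have "\<infinity> \<le> set_dist (votewise_dist dC p) (C, V, \<pi>) (unam s r)"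
    unfolding set_dist_def by (intro INF_greatest) simp
  then show ?thesis by (simp add: top_unique)
qed

lemma set_dist_unam_inside:
  assumes el: "is_election (C, V, \<pi>)"
    and nonneg: "\<And>\<rho> \<sigma>. \<rho> \<in> linord C \<Longrightarrow> \<sigma> \<in> linord C \<Longrightarrow> 0 \<le> dC C \<rho> \<sigma>"
    and p: "1 \<le> p" and r: "r \<in> linord_s s" "set r \<subseteq> C"
  shows "set_dist (votewise_dist dC p) (C, V, \<pi>) (unam s r)
       = votewise_norm p V (\<lambda>v. dist_to_extensions dC s C r (\<pi> v))"
proof -
  have fC: "finite C" and fV: "finite V" and "V \<noteq> {}" and votes: "\<And>v. v \<in> V \<Longrightarrow> \<pi> v \<in> linord C"
    using el by (auto simp: is_election_def)
  have ne: "extensions s C r \<noteq> {}" using extensions_nonempty[OF fC r] .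
  have nearest: "\<exists>\<sigma>. \<sigma> \<in> extensions s C r \<and> dC C \<rho> \<sigma> = dist_to_extensions dC s C r \<rho>" for \<rho>
    using dist_to_extensions_attained[OF fC ne] by blast
  then obtain \<pi>' where \<pi>': "\<And>\<rho>. \<pi>' \<rho> \<in> extensions s C r"
      "\<And>\<rho>. dC C \<rho> (\<pi>' \<rho>) = dist_to_extensions dC s C r \<rho>"
    by metis
  have m_nonneg: "0 \<le> dist_to_extensions dC s C r (\<pi> v)" if "v \<in> V" for v
    using nonneg[OF votes[OF that], of "\<pi>' (\<pi> v)"] \<pi>'[of "\<pi> v"] by (auto simp: extensions_def)
  have "s = card (set r)" using r by (simp add: linord_s_def distinct_card)
  then have "s \<le> card C" using r(2) fC card_mono by metis
  then have witness: "(C, V, \<pi>' \<circ> \<pi>) \<in> unam s r"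
    using el \<pi>'(1) by (auto simp: unam_def is_election_def extensions_def)
  have lower: "votewise_norm p V (\<lambda>v. dist_to_extensions dC s C r (\<pi> v))
      \<le> votewise_dist dC p (C, V, \<pi>) F" if F: "F \<in> unam s r" for F
  proof (cases "votewise_dist dC p (C, V, \<pi>) F = \<infinity>")
    case False
    obtain \<pi>'' where F_eq: "F = (C, V, \<pi>'')"
      and "\<And>v. v \<in> V \<Longrightarrow> \<pi>'' v \<in> extensions s C r"
      using votewise_dist_to_unam[OF F False] by blast
    then show ?thesis
      unfolding F_eq votewise_dist_same_support
      using fV \<open>V \<noteq> {}\<close> p m_nonneg dist_to_extensions_le[OF fC]
      by (intro votewise_norm_mono) auto
  qed simp
  have "votewise_dist dC p (C, V, \<pi>) (C, V, \<pi>' \<circ> \<pi>)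
      = votewise_norm p V (\<lambda>v. dist_to_extensions dC s C r (\<pi> v))"
    unfolding votewise_dist_same_support by (simp add: \<pi>'(2))
  then show ?thesis
    unfolding set_dist_def using witness lower
    by (intro antisym INF_greatest) (auto intro: INF_lower2)
qed

definition vote_share :: "'v set \<Rightarrow> ('v \<Rightarrow> 'c list) \<Rightarrow> 'c list \<Rightarrow> real" where
  "vote_share V \<pi> \<rho> = real (card {v\<in>V. \<pi> v = \<rho>}) / real (card V)"

definition share_cost ::
  "('c set \<Rightarrow> 'c list \<Rightarrow> 'c list \<Rightarrow> real) \<Rightarrow> ereal \<Rightarrow> nat \<Rightarrow> 'c set \<Rightarrow> ('c list \<Rightarrow> real) \<Rightarrow> 'c list \<Rightarrow> real"
  where
  "share_cost dC p s C w r = (if p = \<infinity>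
     then Max (dist_to_extensions dC s C r ` {\<rho>\<in>linord C. w \<rho> \<noteq> 0})
     else (\<Sum>\<rho>\<in>linord C. w \<rho> * dist_to_extensions dC s C r \<rho> powr real_of_ereal p))"

lemma share_cost_cong:
  assumes "\<And>\<rho>. \<rho> \<in> linord C \<Longrightarrow> w \<rho> = w' \<rho>"
  shows "share_cost dC p s C w = share_cost dC p s C w'"
proof -
  have "{\<rho>\<in>linord C. w \<rho> \<noteq> 0} = {\<rho>\<in>linord C. w' \<rho> \<noteq> 0}" using assms by auto
  then show ?thesis unfolding share_cost_def using assms by (auto cong: sum.cong)
qed

lemma share_cost_nonneg: "p \<noteq> \<infinity> \<Longrightarrow> 0 \<le> share_cost dC p s C (vote_share V \<pi>) r"
  unfolding share_cost_def vote_share_def by (auto intro!: sum_nonneg)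

definition root_scale :: "ereal \<Rightarrow> nat \<Rightarrow> real \<Rightarrow> ereal" where
  "root_scale p N x = (if p = \<infinity> then ereal x else ereal ((real N * x) powr (1 / real_of_ereal p)))"

lemma root_scale_le_iff:
  assumes "0 < N" "1 \<le> p" "p \<noteq> \<infinity> \<Longrightarrow> 0 \<le> x" "p \<noteq> \<infinity> \<Longrightarrow> 0 \<le> y"
  shows "root_scale p N x \<le> root_scale p N y \<longleftrightarrow> x \<le> y"
proof (cases "p = \<infinity>")
  case False
  define e where "e = 1 / real_of_ereal p"
  have "0 < e" using real_of_ereal_ge_1[OF assms(2) False] by (simp add: e_def)
  moreover have "0 \<le> real N * x" "0 \<le> real N * y" using assms False by auto
  ultimately have "(real N * x) powr e \<le> (real N * y) powr e \<longleftrightarrow> real N * x \<le> real N * y"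
    by (metis powr_less_mono2 powr_mono2 less_le_not_le linorder_not_le)
  then show ?thesis using False assms(1) by (simp add: root_scale_def e_def)
qed (simp add: root_scale_def)

lemma votewise_norm_eq_root_scale:
  assumes el: "is_election (C, V, \<pi>)"
  shows "votewise_norm p V (\<lambda>v. dist_to_extensions dC s C r (\<pi> v))
       = root_scale p (card V) (share_cost dC p s C (vote_share V \<pi>) r)"
proof -
  have fC: "finite C" and fV: "finite V" and "V \<noteq> {}" and votes: "\<And>v. v \<in> V \<Longrightarrow> \<pi> v \<in> linord C"
    using el by (auto simp: is_election_def)
  then have N: "0 < real (card V)" by (simp add: card_gt_0_iff)
  let ?m = "dist_to_extensions dC s C r"
  show ?thesis
  proof (cases "p = \<infinity>")
    case True
    have "\<pi> ` V = {\<rho>\<in>linord C. vote_share V \<pi> \<rho> \<noteq> 0}"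
      using fV N votes by (auto simp: vote_share_def card_eq_0_iff)
    then have "(\<lambda>v. ?m (\<pi> v)) ` V = ?m ` {\<rho>\<in>linord C. vote_share V \<pi> \<rho> \<noteq> 0}"
      by (simp add: image_image[symmetric])
    then show ?thesis using True by (simp add: votewise_norm_def root_scale_def share_cost_def)
  next
    case False
    define q where "q = real_of_ereal p"
    have "(\<Sum>v\<in>V. ?m (\<pi> v) powr q) = (\<Sum>\<rho>\<in>linord C. \<Sum>v\<in>{v\<in>V. \<pi> v = \<rho>}. ?m (\<pi> v) powr q)"
      using fV finite_linord[OF fC] votes by (intro sum.group[symmetric]) auto
    also have "\<dots> = (\<Sum>\<rho>\<in>linord C. real (card {v\<in>V. \<pi> v = \<rho>}) * ?m \<rho> powr q)"
      by (intro sum.cong refl) simp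
    also have "\<dots> = real (card V) * (\<Sum>\<rho>\<in>linord C. vote_share V \<pi> \<rho> * ?m \<rho> powr q)"
      using N by (simp add: sum_distrib_left vote_share_def)
    finally show ?thesis
      using False by (simp add: votewise_norm_def root_scale_def share_cost_def q_def)
  qed
qed

lemma set_dist_unam_eq:
  assumes "is_election (C, V, \<pi>)"
    and "\<And>\<rho> \<sigma>. \<rho> \<in> linord C \<Longrightarrow> \<sigma> \<in> linord C \<Longrightarrow> 0 \<le> dC C \<rho> \<sigma>"
    and "1 \<le> p" and "r \<in> linord_s s"
  shows "set_dist (votewise_dist dC p) (C, V, \<pi>) (unam s r)
       = (if set r \<subseteq> C then root_scale p (card V) (share_cost dC p s C (vote_share V \<pi>) r) else \<infinity>)"
  using set_dist_unam_inside[where dC = dC, OF assms] set_dist_unam_outside[OF assms(1)]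
    votewise_norm_eq_root_scale[OF assms(1)] by simp

lemma set_dist_unam_le_iff:
  assumes el: "is_election (C, V, \<pi>)"
    and nonneg: "\<And>\<rho> \<sigma>. \<rho> \<in> linord C \<Longrightarrow> \<sigma> \<in> linord C \<Longrightarrow> 0 \<le> dC C \<rho> \<sigma>"
    and p: "1 \<le> p" and r: "r \<in> linord_s s" "r' \<in> linord_s s"
  shows "set_dist (votewise_dist dC p) (C, V, \<pi>) (unam s r)
           \<le> set_dist (votewise_dist dC p) (C, V, \<pi>) (unam s r')
     \<longleftrightarrow> (set r' \<subseteq> C \<longrightarrow> set r \<subseteq> C \<and>
            share_cost dC p s C (vote_share V \<pi>) r \<le> share_cost dC p s C (vote_share V \<pi>) r')"
proof -
  have "0 < card V" using el by (auto simp: is_election_def card_gt_0_iff)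
  then have "root_scale p (card V) (share_cost dC p s C (vote_share V \<pi>) r)
        \<le> root_scale p (card V) (share_cost dC p s C (vote_share V \<pi>) r')
      \<longleftrightarrow> share_cost dC p s C (vote_share V \<pi>) r \<le> share_cost dC p s C (vote_share V \<pi>) r'"
    using p share_cost_nonneg by (intro root_scale_le_iff) auto
  moreover have "root_scale p N x \<noteq> \<infinity>" for N x by (simp add: root_scale_def)
  ultimately show ?thesis
    using set_dist_unam_eq[where dC = dC, OF el nonneg p r(1)]
      set_dist_unam_eq[where dC = dC, OF el nonneg p r(2)]
    by (simp add: top_unique)
qed

lemma dr_rule_eq_minimizers:
  "dr_rule s K d E = {r \<in> linord_s s. \<forall>r'\<in>linord_s s. set_dist d E (K r) \<le> set_dist d E (K r')}"
  unfolding dr_rule_def by (auto intro: INF_lower intro!: antisym INF_greatest)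

theorem corollary6p12:
  fixes dC :: "'c::countable set \<Rightarrow> 'c list \<Rightarrow> 'c list \<Rightarrow> real"
    and p :: ereal and s :: nat
    and E E' :: "('c, 'v::countable) election"
  assumes "infinite (UNIV :: 'c set)" and "infinite (UNIV :: 'v set)"
    and "1 \<le> s"
    and "1 \<le> p"
    and "\<And>C \<rho> \<sigma>. finite C \<Longrightarrow> \<rho> \<in> linord C \<Longrightarrow> \<sigma> \<in> linord C \<Longrightarrow> 0 \<le> dC C \<rho> \<sigma>"
    and "\<And>C \<rho>. finite C \<Longrightarrow> \<rho> \<in> linord C \<Longrightarrow> dC C \<rho> \<rho> = 0"
    and "\<And>C \<rho> \<sigma> \<tau>. finite C \<Longrightarrow> \<rho> \<in> linord C \<Longrightarrow> \<sigma> \<in> linord C \<Longrightarrow> \<tau> \<in> linord C \<Longrightarrow>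
           dC C \<rho> \<tau> \<le> dC C \<rho> \<sigma> + dC C \<sigma> \<tau>"
    and "hom_rel E E'"
  shows "dr_rule s (unam s) (votewise_dist dC p) E = dr_rule s (unam s) (votewise_dist dC p) E'"
proof -
  obtain C V \<pi> C' V' \<pi>' where E: "E = (C, V, \<pi>)" and E': "E' = (C', V', \<pi>')"
    by (cases E, cases E')
  have el: "is_election (C, V, \<pi>)" and el': "is_election (C, V', \<pi>')" and "C' = C"
    and shares: "\<And>\<rho>. \<rho> \<in> linord C \<Longrightarrow> vote_share V \<pi> \<rho> = vote_share V' \<pi>' \<rho>"
    using assms(8) unfolding E E' hom_rel_def vote_share_def by auto
  have nonneg: "\<And>\<rho> \<sigma>. \<rho> \<in> linord C \<Longrightarrow> \<sigma> \<in> linord C \<Longrightarrow> 0 \<le> dC C \<rho> \<sigma>"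
    using assms(5) el by (auto simp: is_election_def)
  have "share_cost dC p s C (vote_share V \<pi>) = share_cost dC p s C (vote_share V' \<pi>')"
    using shares by (rule share_cost_cong)
  then show ?thesis
    unfolding E E' \<open>C' = C\<close> dr_rule_eq_minimizers
    using set_dist_unam_le_iff[where dC = dC, OF el nonneg assms(4)]
      set_dist_unam_le_iff[where dC = dC, OF el' nonneg assms(4)]
    by auto
qed

end
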